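(* Let $m,n$ be even positive integers and let $f$ be the partial Boolean function on $2mn$ bits defined in the context. Then the nondeterministic quantum query complexity of $f$ satisfies $NQ(f)=\min(n/2,m/2)+1$.
   Context: For $z\in\{0,1\}^k$ let $w(z)$ denote its Hamming weight. Let $\mathcal{A}_1=\{0^m y : y\in\{0,1\}^m,\ m/2\le w(y)\le m\}$ and $\mathcal{A}_0=\{y0^m : y\in\{0,1\}^m,\ m/2\le w(y)\le m\}$. A string $x\in\{0,1\}^{2mn}$ is viewed as $n$ consecutive blocks of $2m$ bits. Define $\mathcal{X}_1=\mathcal{A}_0\times\cdots\times\mathcal{A}_0$ ($n$ factors) and $\mathcal{X}_0=\bigcup\{\mathcal{A}_{y_1}\times\cdots\times\mathcal{A}_{y_n} : y\in\{0,1\}^n,\ w(y)=n/2\}$. The partial function $f$ has domain $\mathcal{X}_0\cup\mathcal{X}_1$ with $f(x)=1$ on $\mathcal{X}_1$ and $f(x)=0$ on $\mathcal{X}_0$ (it is the composition of the Deutsch–Jozsa constant-vs-balanced function on $n$ bits with $n$ copies of the partial function $h$ on $2m$ bits that is $1$ on $\mathcal{A}_1$ and $0$ on $\mathcal{A}_0$). Quantum query model: the input $x\in\{0,1\}^N$ is accessed via the unitary $O_x:|i,b,z\rangle\mapsto|i,b\oplus x_i,z\rangle$; a $T$-query algorithm is $U_TO_xU_{T-1}\cdots O_xU_1O_xU_0$ applied to $|0\rangle$, with fixed unitaries $U_k$, followed by a measurement giving output $0$, $1$, or "don't know". A nondeterministic quantum algorithm for $f$ outputs $1$ with positive probability on every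 $x\in\mathcal{X}_1$ and with probability $0$ on every $x\in\mathcal{X}_0$. $NQ(f)$ is the minimal number of queries of such an algorithm. *)

theory Defs
  imports Complex_Main
begin

text \<open>Bit strings are functions nat => bool (True = 1); only positions below the
  input length matter. A block is a string of 2m bits, indexed 0..2m-1.\<close>

definition inA :: "nat \<Rightarrow> bool \<Rightarrow> (nat \<Rightarrow> bool) \<Rightarrow> bool" where
  "inA m c blk \<longleftrightarrow>
     (if c then (\<forall>i<m. \<not> blk i) \<and> m \<le> 2 * card {i. m \<le> i \<and> i < 2*m \<and> blk i}
           else (\<forall>i. m \<le> i \<and> i < 2*m \<longrightarrow> \<not> blk i) \<and> m \<le> 2 * card {i. i < m \<and> blk i})"

definition block :: "nat \<Rightarrow> (nat \<Rightarrow> bool) \<Rightarrow> nat \<Rightarrow> (nat \<Rightarrow> bool)" where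
  "block m x j = (\<lambda>i. x (2*m*j + i))"

text \<open>Inputs on which f = 1: every block lies in A_0.\<close>
definition X1 :: "nat \<Rightarrow> nat \<Rightarrow> (nat \<Rightarrow> bool) set" where
  "X1 m n = {x. \<forall>j<n. inA m False (block m x j)}"

text \<open>Inputs on which f = 0: block j lies in A_{y_j} for some y of weight n/2.\<close>
definition X0 :: "nat \<Rightarrow> nat \<Rightarrow> (nat \<Rightarrow> bool) set" where
  "X0 m n = {x. \<exists>y::nat \<Rightarrow> bool. 2 * card {j. j < n \<and> y j} = n \<and>
                   (\<forall>j<n. inA m (y j) (block m x j))}"

text \<open>Basis states |i,b,z> with query index i < N, answer bit b, workspace z < W.\<close>
type_synonym basis = "nat \<times> bool \<times> nat"

definition basis_set :: "nat \<Rightarrow> nat \<Rightarrow> basis set" where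
  "basis_set N W = {0..<N} \<times> UNIV \<times> {0..<W}"

definition unitary_on :: "basis set \<Rightarrow> (basis \<Rightarrow> basis \<Rightarrow> complex) \<Rightarrow> bool" where
  "unitary_on B U \<longleftrightarrow>
     (\<forall>a\<in>B. \<forall>b\<in>B. (\<Sum>c\<in>B. cnj (U c a) * U c b) = (if a = b then 1 else 0))"

definition apply_op :: "(basis \<Rightarrow> basis \<Rightarrow> complex) \<Rightarrow> basis set \<Rightarrow> (basis \<Rightarrow> complex) \<Rightarrow> (basis \<Rightarrow> complex)" where
  "apply_op U B v = (\<lambda>a. \<Sum>b\<in>B. U a b * v b)"

definition query_op :: "(nat \<Rightarrow> bool) \<Rightarrow> (basis \<Rightarrow> complex) \<Rightarrow> (basis \<Rightarrow> complex)" where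
  "query_op x v = (\<lambda>(i, b, z). v (i, b \<noteq> x i, z))"

definition init_state :: "basis \<Rightarrow> complex" where
  "init_state = (\<lambda>a. if a = (0, False, 0) then 1 else 0)"

fun run_queries :: "basis set \<Rightarrow> (nat \<Rightarrow> bool) \<Rightarrow> (basis \<Rightarrow> basis \<Rightarrow> complex) list
                     \<Rightarrow> (basis \<Rightarrow> complex) \<Rightarrow> (basis \<Rightarrow> complex)" where
  "run_queries B x [] v = v"
| "run_queries B x (U # Us) v = run_queries B x Us (apply_op U B (query_op x v))"

text \<open>Final state U_T O_x ... U_1 O_x U_0 |0>, where Us = [U_1, ..., U_T].\<close>
definition final_state :: "basis set \<Rightarrow> (nat \<Rightarrow> bool) \<Rightarrow> (basis \<Rightarrow> basis \<Rightarrow> complex)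
                          \<Rightarrow> (basis \<Rightarrow> basis \<Rightarrow> complex) list \<Rightarrow> (basis \<Rightarrow> complex)" where
  "final_state B x U0 Us = run_queries B x Us (apply_op U0 B init_state)"

definition accept_prob :: "basis set \<Rightarrow> (nat \<Rightarrow> bool) \<Rightarrow> (basis \<Rightarrow> basis \<Rightarrow> complex)
                          \<Rightarrow> (basis \<Rightarrow> basis \<Rightarrow> complex) list \<Rightarrow> basis set \<Rightarrow> real" where
  "accept_prob B x U0 Us S = (\<Sum>a\<in>S. (cmod (final_state B x U0 Us a))\<^sup>2)"

definition nq_algorithm :: "nat \<Rightarrow> nat \<Rightarrow> (nat \<Rightarrow> bool) set \<Rightarrow> (nat \<Rightarrow> bool) set \<Rightarrow> bool" where
  "nq_algorithm N T Xzero Xone \<longleftrightarrow>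
     (\<exists>W U0 Us S. W > 0 \<and> length Us = T \<and>
        unitary_on (basis_set N W) U0 \<and> (\<forall>U\<in>set Us. unitary_on (basis_set N W) U) \<and>
        S \<subseteq> basis_set N W \<and>
        (\<forall>x\<in>Xone. accept_prob (basis_set N W) x U0 Us S > 0) \<and>
        (\<forall>x\<in>Xzero. accept_prob (basis_set N W) x U0 Us S = 0))"

definition NQ :: "nat \<Rightarrow> (nat \<Rightarrow> bool) set \<Rightarrow> (nat \<Rightarrow> bool) set \<Rightarrow> nat" where
  "NQ N Xzero Xone = (LEAST T. nq_algorithm N T Xzero Xone)"

end

theory Submission
  imports Defs "HOL-Library.FuncSet" "HOL-Combinatorics.Transposition"
begin

(* After T queries the amplitude of any fixed basis state is a polynomial of degree
   at most T in the input bits, and for a nondeterministic algorithm one of these amplitudes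
   vanishes on X0 but not on all of X1. The key fact is that a polynomial of degree d vanishing
   on all subsets of size at least t of a set V with d + t <= card V vanishes on every subset of
   V. Applied within single blocks, to inputs that may also contain all-zero blocks, and then
   across the blocks, it shows that a polynomial of degree at most min (m/2) (n/2) vanishing on
   X0 also vanishes on X1.

   Up to a positive factor, every sum over k of products over t < d of
   g k t (x (s k t)) is an amplitude of a d-query algorithm, and two such sums separate X1 from
   X0: the product of the first-half weights of the blocks 0, ..., n/2, and the sum over all
   blocks of a polynomial in the first-half weight that is 1 on A_1 and 0 on A_0, minus n/2. *)

section \<open>Degree of functions on the Boolean cube\<close>

text \<open>Functions on the Boolean cube given by a polynomial of degree at most d in the
  coordinates, described by closure rules.\<close>
inductive deg_le :: "nat \<Rightarrow> (('i \<Rightarrow> bool) \<Rightarrow> 'a::comm_ring_1) \<Rightarrow> bool" where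
  deg_le_const0: "deg_le 0 (\<lambda>x. c)"
| deg_le_var: "deg_le 1 (\<lambda>x. if x i then 1 else 0)"
| deg_le_add: "deg_le d f \<Longrightarrow> deg_le d g \<Longrightarrow> deg_le d (\<lambda>x. f x + g x)"
| deg_le_mult: "deg_le d f \<Longrightarrow> deg_le e g \<Longrightarrow> deg_le (d + e) (\<lambda>x. f x * g x)"
| deg_le_mono: "deg_le d f \<Longrightarrow> d \<le> e \<Longrightarrow> deg_le e f"

lemma deg_le_cong: "deg_le d f \<Longrightarrow> (\<And>x. f x = g x) \<Longrightarrow> deg_le d g"
  by (metis ext)

lemma deg_le_const: "deg_le d (\<lambda>x. c)"
  using deg_le_mono[OF deg_le_const0] by blast

lemma deg_le_cmult: "deg_le d f \<Longrightarrow> deg_le d (\<lambda>x. c * f x)"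
  using deg_le_mult[OF deg_le_const0, of d f c] by simp

lemma deg_le_neg_var: "deg_le 1 (\<lambda>x. if x i then 0 else 1)"
  using deg_le_add[OF deg_le_const[of 1 1] deg_le_cmult[OF deg_le_var[of i], of "-1"]]
  by (rule deg_le_cong) simp

lemma deg_le_sum:
  "finite A \<Longrightarrow> (\<And>a. a \<in> A \<Longrightarrow> deg_le d (f a)) \<Longrightarrow> deg_le d (\<lambda>x. \<Sum>a\<in>A. f a x)"
  by (induction A rule: finite_induct) (auto intro: deg_le_const deg_le_add)

lemma deg_le_subst:
  fixes P :: "('i \<Rightarrow> bool) \<Rightarrow> 'a::comm_ring_1"
  assumes "deg_le d P" and "\<And>i. deg_le 1 (\<lambda>y. if \<sigma> y i then 1 else (0::'a))"
  shows "deg_le d (\<lambda>y. P (\<sigma> y))"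
  using assms(1)
proof induction
  case (deg_le_var i)
  show ?case by (rule assms(2))
qed (auto intro: deg_le.intros)

lemma deg_le_0_const:
  fixes f :: "('i \<Rightarrow> bool) \<Rightarrow> 'a::comm_ring_1"
  assumes "deg_le 0 f"
  shows "f x = f y"
proof -
  have "d = 0 \<longrightarrow> f x = f y" if "deg_le d f" for d and f :: "('i \<Rightarrow> bool) \<Rightarrow> 'a"
    using that by induction auto
  then show ?thesis using assms by blast
qed

lemma deg_le_fun_upd:
  fixes f :: "('i \<Rightarrow> bool) \<Rightarrow> 'a::comm_ring_1"
  assumes "deg_le d f"
  shows "deg_le d (\<lambda>y. f (y(v := c)))"
proof (rule deg_le_subst[OF assms])
  show "deg_le 1 (\<lambda>y. if (y(v := c)) i then 1 else (0::'a))" for i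
  proof (cases "i = v")
    case True
    then show ?thesis using deg_le_const[of 1 "if c then 1 else (0::'a)"] by simp
  next
    case False
    then show ?thesis using deg_le_var[of i] by simp
  qed
qed

definition partial_diff :: "'i \<Rightarrow> (('i \<Rightarrow> bool) \<Rightarrow> 'a::ab_group_add) \<Rightarrow> ('i \<Rightarrow> bool) \<Rightarrow> 'a" where
  "partial_diff v f y = f (y(v := True)) - f (y(v := False))"

lemma partial_diff_deg_le_0: "deg_le 0 f \<Longrightarrow> partial_diff v f y = 0"
  using deg_le_0_const by (metis partial_diff_def right_minus_eq)

lemma deg_le_partial_diff: "deg_le d f \<Longrightarrow> deg_le (d - 1) (partial_diff v f)"
proof (induction rule: deg_le.induct)
  case (deg_le_const0 c)
  then show ?case by (simp add: partial_diff_def deg_le_const)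
next
  case (deg_le_var i)
  show ?case
    using deg_le_const[of _ "if i = v then 1 else 0"]
    by (rule deg_le_cong) (simp add: partial_diff_def)
next
  case (deg_le_add d f g)
  show ?case
    by (rule deg_le_cong[OF deg_le.deg_le_add[OF deg_le_add.IH]]) (simp add: partial_diff_def)
next
  case (deg_le_mult d f e g)
  let ?f0 = "\<lambda>y. f (y(v := False))" and ?g1 = "\<lambda>y. g (y(v := True))"
  have leibniz: "partial_diff v (\<lambda>x. f x * g x) y
      = partial_diff v f y * ?g1 y + ?f0 y * partial_diff v g y" for y
    by (simp add: partial_diff_def algebra_simps)
  have left: "deg_le (d + e - 1) (\<lambda>y. partial_diff v f y * ?g1 y)"
  proof (cases "d = 0")
    case True
    then have "partial_diff v f y = 0" for y using partial_diff_deg_le_0 deg_le_mult.hyps(1) by simp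
    then show ?thesis by (intro deg_le_cong[OF deg_le_const[of _ 0]]) simp
  next
    case False
    then show ?thesis
      using deg_le.deg_le_mult[OF deg_le_mult.IH(1) deg_le_fun_upd[OF deg_le_mult.hyps(2)]] by simp
  qed
  have right: "deg_le (d + e - 1) (\<lambda>y. ?f0 y * partial_diff v g y)"
  proof (cases "e = 0")
    case True
    then have "partial_diff v g y = 0" for y using partial_diff_deg_le_0 deg_le_mult.hyps(2) by simp
    then show ?thesis by (intro deg_le_cong[OF deg_le_const[of _ 0]]) simp
  next
    case False
    then show ?thesis
      using deg_le.deg_le_mult[OF deg_le_fun_upd[OF deg_le_mult.hyps(1)] deg_le_mult.IH(2)] by simp
  qed
  show ?case by (rule deg_le_cong[OF deg_le.deg_le_add[OF left right]]) (simp add: leibniz)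
next
  case (deg_le_mono d f e)
  then show ?case using deg_le.deg_le_mono diff_le_mono by blast
qed

lemma zero_on_subsets_if_insert_invariant:
  fixes g :: "('i \<Rightarrow> bool) \<Rightarrow> 'a::zero"
  assumes "finite V" and "t \<le> card V"
    and large: "\<And>Y. Y \<subseteq> V \<Longrightarrow> t \<le> card Y \<Longrightarrow> g (\<lambda>i. i \<in> Y) = 0"
    and insert: "\<And>v Y. v \<in> V \<Longrightarrow> Y \<subseteq> V \<Longrightarrow> v \<notin> Y \<Longrightarrow> g (\<lambda>i. i \<in> insert v Y) = g (\<lambda>i. i \<in> Y)"
    and "Y \<subseteq> V"
  shows "g (\<lambda>i. i \<in> Y) = 0"
  using \<open>Y \<subseteq> V\<close>
proof (induction "card V - card Y" arbitrary: Y rule: less_induct)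
  case (less Y)
  show ?case
  proof (cases "t \<le> card Y")
    case True
    then show ?thesis using large less.prems by blast
  next
    case False
    with \<open>t \<le> card V\<close> have "Y \<noteq> V" by auto
    with less.prems obtain v where v: "v \<in> V" "v \<notin> Y" by blast
    have "finite Y" using less.prems \<open>finite V\<close> finite_subset by blast
    then have "card V - card (insert v Y) < card V - card Y"
      using v less.prems \<open>finite V\<close> card_mono[of V "insert v Y"] by simp
    then have "g (\<lambda>i. i \<in> insert v Y) = 0" using less v by blast
    then show ?thesis using insert v less.prems by simp
  qed
qed

text \<open>Induction on d: a partial difference in a direction v \<in> V has degree d - 1 and vanishes on
  the large subsets of V - {v}, hence on all of them, so adding v to a subset does not change
  the value.\<close>
lemma deg_le_vanishing:
  fixes g :: "('i \<Rightarrow> bool) \<Rightarrow> 'a::comm_ring_1"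
  assumes "deg_le d g" and "finite V" and "d + t \<le> card V"
    and "\<And>Y. Y \<subseteq> V \<Longrightarrow> t \<le> card Y \<Longrightarrow> g (\<lambda>i. i \<in> Y) = 0"
    and "Y \<subseteq> V"
  shows "g (\<lambda>i. i \<in> Y) = 0"
  using assms
proof (induction d arbitrary: g V Y)
  case 0
  then show ?case using deg_le_0_const[of g "\<lambda>i. i \<in> Y" "\<lambda>i. i \<in> V"] by simp
next
  case (Suc d)
  have upd: "(\<lambda>i. i \<in> Z)(v := True) = (\<lambda>i. i \<in> insert v Z)"
    "v \<notin> Z \<Longrightarrow> (\<lambda>i. i \<in> Z)(v := False) = (\<lambda>i. i \<in> Z)" for v :: 'i and Z
    by (auto simp: fun_eq_iff)
  have "g (\<lambda>i. i \<in> insert v Z) = g (\<lambda>i. i \<in> Z)" if v: "v \<in> V" "Z \<subseteq> V" "v \<notin> Z" for v Z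
  proof -
    have "partial_diff v g (\<lambda>i. i \<in> Y) = 0" if "Y \<subseteq> V - {v}" "t \<le> card Y" for Y
    proof -
      have "finite Y" using that(1) \<open>finite V\<close> by (meson Diff_subset finite_subset order_trans)
      have "v \<notin> Y" and "insert v Y \<subseteq> V" using that v by auto
      then have "t \<le> card (insert v Y)" using that \<open>finite Y\<close> by (simp add: card_insert_if)
      then show ?thesis
        using that \<open>v \<notin> Y\<close> \<open>insert v Y \<subseteq> V\<close> Suc.prems(4)[of "insert v Y"] Suc.prems(4)[of Y]
        by (simp add: partial_diff_def upd)
    qed
    moreover have "d + t \<le> card (V - {v})" and "Z \<subseteq> V - {v}" using Suc.prems(3) v by auto
    ultimately have "partial_diff v g (\<lambda>i. i \<in> Z) = 0"
      using Suc.IH[of "partial_diff v g" "V - {v}" Z] deg_le_partial_diff[OF Suc.prems(1), of v]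
        Suc.prems(2) by simp
    then show ?thesis using v by (simp add: partial_diff_def upd)
  qed
  then show ?case
    using zero_on_subsets_if_insert_invariant[of V t g Y] Suc.prems by simp
qed

lemma deg_le_query_op:
  assumes "\<And>a. deg_le k (\<lambda>x. v x a)"
  shows "deg_le (k + 1) (\<lambda>x. query_op x (v x) a)"
proof -
  obtain i b z where a: "a = (i, b, z)" by (cases a)
  have "deg_le (1 + k) (\<lambda>x. (if x i then 1 else 0) * v x (i, \<not> b, z)
                          + (if x i then 0 else 1) * v x (i, b, z))"
    by (rule deg_le_add[OF deg_le_mult[OF deg_le_var assms] deg_le_mult[OF deg_le_neg_var assms]])
  then show ?thesis
    unfolding add.commute[of k 1] by (rule deg_le_cong) (simp add: a query_op_def)
qed

lemma deg_le_run_queries: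
  assumes "finite B" and "\<And>a. deg_le k (\<lambda>x. v x a)"
  shows "deg_le (k + length Us) (\<lambda>x. run_queries B x Us (v x) a)"
  using assms(2)
proof (induction Us arbitrary: k v)
  case (Cons U Us)
  have "deg_le (k + 1) (\<lambda>x. apply_op U B (query_op x (v x)) a)" for a
    unfolding apply_op_def using assms(1) Cons.prems
    by (intro deg_le_sum deg_le_cmult deg_le_query_op)
  from Cons.IH[OF this] show ?case by simp
qed simp

lemma deg_le_final_state:
  assumes "finite B"
  shows "deg_le (length Us) (\<lambda>x. final_state B x U0 Us a)"
proof -
  have "deg_le (0 + length Us) (\<lambda>x. run_queries B x Us ((\<lambda>x. apply_op U0 B init_state) x) a)"
    by (rule deg_le_run_queries[OF assms deg_le_const])
  then show ?thesis by (simp add: final_state_def)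
qed

section \<open>The lower bound\<close>

lemma inA_cong:
  assumes "\<And>i. i < 2*m \<Longrightarrow> b1 i = b2 i"
  shows "inA m c b1 = inA m c b2"
proof -
  have "{i. m \<le> i \<and> i < 2*m \<and> b1 i} = {i. m \<le> i \<and> i < 2*m \<and> b2 i}"
    and "{i. i < m \<and> b1 i} = {i. i < m \<and> b2 i}"
    using assms by auto
  then show ?thesis using assms by (simp add: inA_def)
qed

lemma inA_ex_one:
  assumes "0 < m" and "inA m c blk"
  shows "\<exists>i<2*m. blk i"
proof (cases c)
  case True
  then have "m \<le> 2 * card {i. m \<le> i \<and> i < 2*m \<and> blk i}" using assms(2) by (simp add: inA_def)
  then have "{i. m \<le> i \<and> i < 2*m \<and> blk i} \<noteq> {}" using assms(1) by (intro notI) simp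
  then show ?thesis by auto
next
  case False
  then have "m \<le> 2 * card {i. i < m \<and> blk i}" using assms(2) by (simp add: inA_def)
  then have "{i. i < m \<and> blk i} \<noteq> {}" using assms(1) by (intro notI) simp
  then obtain i where "i < m" "blk i" by auto
  then show ?thesis by (intro exI[of _ i]) auto
qed

lemma inA_False_not_True:
  assumes "0 < m" and "inA m False blk"
  shows "\<not> inA m True blk"
proof -
  have "m \<le> 2 * card {i. i < m \<and> blk i}" using assms(2) by (simp add: inA_def)
  then have "{i. i < m \<and> blk i} \<noteq> {}" using assms(1) by (intro notI) simp
  then show ?thesis by (auto simp: inA_def)
qed

lemma block_index_divmod:
  fixes m i j :: nat
  assumes "0 < m" and "i < 2*m"
  shows "(2*m*j + i) div (2*m) = j" and "(2*m*j + i) mod (2*m) = i"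
  using assms by auto

definition zero_block :: "nat \<Rightarrow> (nat \<Rightarrow> bool) \<Rightarrow> nat \<Rightarrow> bool" where
  "zero_block m z j \<longleftrightarrow> (\<forall>i<2*m. \<not> block m z j i)"

lemma zero_block_not_inA:
  assumes "0 < m" and "zero_block m z j"
  shows "\<not> inA m c (block m z j)"
  using inA_ex_one[OF assms(1)] assms(2) unfolding zero_block_def by blast

definition partial_input :: "nat \<Rightarrow> nat \<Rightarrow> (nat \<Rightarrow> bool) \<Rightarrow> bool" where
  "partial_input m n z \<longleftrightarrow>
     (\<forall>j<n. inA m False (block m z j) \<or> inA m True (block m z j) \<or> zero_block m z j)"

definition count_A1 :: "nat \<Rightarrow> nat \<Rightarrow> (nat \<Rightarrow> bool) \<Rightarrow> nat" where
  "count_A1 m n z = card {j. j < n \<and> inA m True (block m z j)}"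

definition count_zero :: "nat \<Rightarrow> nat \<Rightarrow> (nat \<Rightarrow> bool) \<Rightarrow> nat" where
  "count_zero m n z = card {j. j < n \<and> zero_block m z j}"

lemma X0_if_no_zero_block:
  assumes "partial_input m n z" and "count_zero m n z = 0" and "2 * count_A1 m n z = n"
  shows "z \<in> X0 m n"
proof -
  have "\<not> zero_block m z j" if "j < n" for j
    using assms(2) that by (simp add: count_zero_def)
  then have "inA m (inA m True (block m z j)) (block m z j)" if "j < n" for j
    using assms(1) that by (cases "inA m True (block m z j)") (auto simp: partial_input_def)
  then show ?thesis
    using assms(3) unfolding X0_def count_A1_def
    by (auto intro!: exI[of _ "\<lambda>j. inA m True (block m z j)"])
qed

definition fill_block :: "nat \<Rightarrow> (nat \<Rightarrow> bool) \<Rightarrow> nat \<Rightarrow> (nat \<Rightarrow> bool) \<Rightarrow> bool \<Rightarrow> nat \<Rightarrow> bool" where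
  "fill_block m z j w c = (\<lambda>p. if p div (2*m) = j then
      (if c then m \<le> p mod (2*m) \<and> w (p mod (2*m) - m) else p mod (2*m) < m \<and> w (p mod (2*m)))
      else z p)"

lemma block_fill_block_same:
  "0 < m \<Longrightarrow> i < 2*m \<Longrightarrow>
     block m (fill_block m z j w c) j i = (if c then m \<le> i \<and> w (i - m) else i < m \<and> w i)"
  by (simp add: block_def fill_block_def block_index_divmod)

lemma block_fill_block_other:
  "0 < m \<Longrightarrow> j' \<noteq> j \<Longrightarrow> i < 2*m \<Longrightarrow> block m (fill_block m z j w c) j' i = block m z j' i"
  by (simp add: block_def fill_block_def block_index_divmod)

lemma inA_fill_block_other:
  "0 < m \<Longrightarrow> j' \<noteq> j \<Longrightarrow> inA m c' (block m (fill_block m z j w c) j') = inA m c' (block m z j')"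
  by (rule inA_cong) (simp add: block_fill_block_other)

lemma zero_block_fill_block_other:
  "0 < m \<Longrightarrow> j' \<noteq> j \<Longrightarrow> zero_block m (fill_block m z j w c) j' = zero_block m z j'"
  by (simp add: zero_block_def block_fill_block_other)

lemma inA_fill_block_same:
  assumes "0 < m" and "Y \<subseteq> {..<m}" and "m \<le> 2 * card Y"
  shows "inA m c (block m (fill_block m z j (\<lambda>i. i \<in> Y) c) j)"
proof (cases c)
  case True
  have "{i. m \<le> i \<and> i < 2*m \<and> block m (fill_block m z j (\<lambda>i. i \<in> Y) c) j i} = (\<lambda>i. i + m) ` Y"
    (is "?L = _")
  proof (intro set_eqI iffI)
    fix i assume "i \<in> ?L"
    then have "m \<le> i" "i - m \<in> Y" using True assms(1) by (auto simp: block_fill_block_same)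
    then show "i \<in> (\<lambda>i. i + m) ` Y" by (intro image_eqI[of _ _ "i - m"]) auto
  next
    fix i assume "i \<in> (\<lambda>i. i + m) ` Y"
    then show "i \<in> ?L" using assms(1,2) True by (auto simp: block_fill_block_same)
  qed
  moreover have "card ((\<lambda>i. i + m) ` Y) = card Y" by (simp add: card_image)
  ultimately show ?thesis using assms True by (simp add: inA_def block_fill_block_same)
next
  case False
  have "{i. i < m \<and> block m (fill_block m z j (\<lambda>i. i \<in> Y) c) j i} = Y"
    using assms(1,2) False by (auto simp: block_fill_block_same)
  then show ?thesis using assms False by (simp add: inA_def block_fill_block_same)
qed

lemma fill_block_empty:
  assumes "0 < m" and "zero_block m z j"
  shows "fill_block m z j (\<lambda>i. False) c = z"
proof
  fix p
  show "fill_block m z j (\<lambda>i. False) c p = z p"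
  proof (cases "p div (2*m) = j")
    case True
    then have p: "p = 2*m*j + p mod (2*m)" by (metis div_mult_mod_eq mult.commute)
    have "p mod (2*m) < 2*m" using assms(1) by simp
    then have "\<not> z (2*m*j + p mod (2*m))" using assms(2) by (simp add: zero_block_def block_def)
    with p have "\<not> z p" by metis
    then show ?thesis using True by (simp add: fill_block_def)
  qed (simp add: fill_block_def)
qed

lemma deg_le_fill_block:
  fixes P :: "(nat \<Rightarrow> bool) \<Rightarrow> 'a::comm_ring_1"
  assumes "deg_le d P"
  shows "deg_le d (\<lambda>w. P (fill_block m z j w c))"
proof (rule deg_le_subst[OF assms])
  fix p
  let ?r = "p mod (2*m)"
  show "deg_le 1 (\<lambda>w. if fill_block m z j w c p then 1 else (0::'a))"
  proof (cases "p div (2*m) = j \<and> (if c then m \<le> ?r else ?r < m)")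
    case True
    show ?thesis
      by (rule deg_le_cong[OF deg_le_var[of "if c then ?r - m else ?r"]])
        (use True in \<open>auto simp: fill_block_def\<close>)
  next
    case False
    show ?thesis
      using deg_le_const[of 1 "if p div (2*m) = j then 0 else if z p then 1 else 0"]
      by (rule deg_le_cong) (use False in \<open>auto simp: fill_block_def\<close>)
  qed
qed

lemma fill_zero_block:
  fixes c :: bool
  assumes m: "0 < m" "even m" and j: "j < n" "zero_block m z j" and z: "partial_input m n z"
    and Y: "Y \<subseteq> {..<m}" "m div 2 \<le> card Y"
  defines "z' \<equiv> fill_block m z j (\<lambda>i. i \<in> Y) c"
  shows "partial_input m n z'"
    and "count_zero m n z' = count_zero m n z - 1"
    and "count_A1 m n z' = count_A1 m n z + (if c then 1 else 0)"
proof -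
  have "m \<le> 2 * card Y" using Y(2) m(2) by presburger
  then have filled: "inA m c (block m z' j)"
    unfolding z'_def by (rule inA_fill_block_same[OF m(1) Y(1)])
  have other: "inA m c' (block m z' j') = inA m c' (block m z j')"
    "zero_block m z' j' = zero_block m z j'" if "j' \<noteq> j" for j' c'
    unfolding z'_def using that m(1)
    by (simp_all add: inA_fill_block_other zero_block_fill_block_other)
  have not_A1: "\<not> inA m True (block m z j)"
    using zero_block_not_inA[OF m(1) j(2)] .
  have zero_iff: "zero_block m z' j' \<longleftrightarrow> zero_block m z j' \<and> j' \<noteq> j" for j'
  proof (cases "j' = j")
    case True
    then show ?thesis using zero_block_not_inA[OF m(1)] filled by blast
  qed (simp add: other)
  have A1_iff:
    "inA m True (block m z' j') \<longleftrightarrow> (if j' = j then c else inA m True (block m z j'))" for j'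
  proof (cases "j' = j")
    case True
    then show ?thesis using filled inA_False_not_True[OF m(1)] by (cases c) auto
  qed (simp add: other)
  show "partial_input m n z'"
    unfolding partial_input_def
  proof (intro allI impI)
    fix j' assume "j' < n"
    show "inA m False (block m z' j') \<or> inA m True (block m z' j') \<or> zero_block m z' j'"
    proof (cases "j' = j")
      case True
      then show ?thesis using filled by (cases c) auto
    next
      case False
      then show ?thesis using z \<open>j' < n\<close> by (simp add: other partial_input_def)
    qed
  qed
  have "{j'. j' < n \<and> zero_block m z' j'} = {j'. j' < n \<and> zero_block m z j'} - {j}"
    using zero_iff by auto
  then show "count_zero m n z' = count_zero m n z - 1"
    using j by (simp add: count_zero_def)
  have "{j'. j' < n \<and> inA m True (block m z' j')}
      = (if c then insert j else id) {j'. j' < n \<and> inA m True (block m z j')}"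
    using A1_iff j(1) not_A1 by auto
  then show "count_A1 m n z' = count_A1 m n z + (if c then 1 else 0)"
    using not_A1 by (simp add: count_A1_def)
qed

lemma d_le_half: "2 * d \<le> m \<Longrightarrow> d + m div 2 \<le> (m::nat)"
  by presburger

text \<open>Induction on the number of zero blocks: filling a zero block with a word of weight at least
  m/2 (into the half that keeps the count of A_1 blocks at most n/2) gives a partial input with
  fewer zero blocks, so P vanishes on all such fillings and hence, by degree, on the empty word.\<close>
lemma vanishes_on_partial_input:
  fixes P :: "(nat \<Rightarrow> bool) \<Rightarrow> 'a::comm_ring_1"
  assumes m: "0 < m" "even m" and "even n" and "2 * d \<le> m"
    and P: "deg_le d P" and P_X0: "\<And>x. x \<in> X0 m n \<Longrightarrow> P x = 0"
  shows "partial_input m n z \<Longrightarrow> 2 * count_A1 m n z \<le> n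
    \<Longrightarrow> n \<le> 2 * (count_A1 m n z + count_zero m n z) \<Longrightarrow> P z = 0"
proof (induction "count_zero m n z" arbitrary: z)
  case 0
  then show ?case using X0_if_no_zero_block P_X0 by (metis add_0_right le_antisym)
next
  case (Suc k)
  then have "{j. j < n \<and> zero_block m z j} \<noteq> {}"
    unfolding count_zero_def by (metis card.empty nat.distinct(1))
  then obtain j where j: "j < n" "zero_block m z j" by auto
  define c where "c = (2 * count_A1 m n z < n)"
  have "P (fill_block m z j (\<lambda>i. i \<in> Y) c) = 0" if Y: "Y \<subseteq> {..<m}" "m div 2 \<le> card Y" for Y
    using fill_zero_block[OF m j Suc.prems(1) Y, of c] Suc \<open>even n\<close>
    by (intro Suc.hyps(1)) (auto simp: c_def)
  then have "P (fill_block m z j (\<lambda>i. i \<in> {}) c) = 0"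
    using deg_le_vanishing[OF deg_le_fill_block[OF P, of m z j c], of "{..<m}" "m div 2" "{}"]
      \<open>2 * d \<le> m\<close> by (simp add: d_le_half)
  then show ?case using fill_block_empty[OF m(1) j(2)] by simp
qed

definition clear_blocks :: "nat \<Rightarrow> (nat \<Rightarrow> bool) \<Rightarrow> (nat \<Rightarrow> bool) \<Rightarrow> nat \<Rightarrow> bool" where
  "clear_blocks m x y p \<longleftrightarrow> x p \<and> \<not> y (p div (2*m))"

lemma block_clear_blocks:
  "0 < m \<Longrightarrow> i < 2*m \<Longrightarrow> block m (clear_blocks m x y) j i = (block m x j i \<and> \<not> y j)"
  by (simp add: block_def clear_blocks_def block_index_divmod)

lemma deg_le_clear_blocks:
  fixes P :: "(nat \<Rightarrow> bool) \<Rightarrow> 'a::comm_ring_1"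
  assumes "deg_le d P"
  shows "deg_le d (\<lambda>y. P (clear_blocks m x y))"
proof (rule deg_le_subst[OF assms])
  fix p
  show "deg_le 1 (\<lambda>y. if clear_blocks m x y p then 1 else (0::'a))"
  proof (cases "x p")
    case True
    show ?thesis
      by (rule deg_le_cong[OF deg_le_neg_var[of "p div (2*m)"]]) (simp add: clear_blocks_def True)
  next
    case False
    show ?thesis
      by (rule deg_le_cong[OF deg_le_const[of 1 0]]) (simp add: clear_blocks_def False)
  qed
qed

lemma clear_blocks_partial_input:
  assumes "0 < m" and x: "x \<in> X1 m n" and "Y \<subseteq> {..<n}"
  defines "z \<equiv> clear_blocks m x (\<lambda>j. j \<in> Y)"
  shows "partial_input m n z" and "count_A1 m n z = 0" and "count_zero m n z = card Y"
proof -
  have zero: "zero_block m z j" if "j \<in> Y" for j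
    using that assms(1) by (simp add: zero_block_def z_def block_clear_blocks)
  have A0: "inA m False (block m z j)" if "j < n" "j \<notin> Y" for j
  proof -
    have "inA m False (block m z j) = inA m False (block m x j)"
      by (rule inA_cong) (simp add: z_def block_clear_blocks assms(1) that(2))
    then show ?thesis using x that(1) by (simp add: X1_def)
  qed
  show "partial_input m n z" using zero A0 by (auto simp: partial_input_def)
  have "\<not> inA m True (block m z j)" if "j < n" for j
    using zero[of j] A0[OF that] zero_block_not_inA[OF assms(1)] inA_False_not_True[OF assms(1)]
    by (cases "j \<in> Y") auto
  then show "count_A1 m n z = 0" by (simp add: count_A1_def)
  have "zero_block m z j \<longleftrightarrow> j \<in> Y" if "j < n" for j
    using zero[of j] A0[OF that] zero_block_not_inA[OF assms(1), of z j False]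
    by (cases "j \<in> Y") auto
  then have "{j. j < n \<and> zero_block m z j} = Y" using assms(3) by auto
  then show "count_zero m n z = card Y" by (simp add: count_zero_def)
qed

lemma vanishes_on_X1:
  fixes P :: "(nat \<Rightarrow> bool) \<Rightarrow> 'a::comm_ring_1"
  assumes m: "0 < m" "even m" and "even n" and "2 * d \<le> m" and "2 * d \<le> n"
    and P: "deg_le d P" and P_X0: "\<And>x. x \<in> X0 m n \<Longrightarrow> P x = 0"
    and x: "x \<in> X1 m n"
  shows "P x = 0"
proof -
  have "P (clear_blocks m x (\<lambda>j. j \<in> Y)) = 0" if "Y \<subseteq> {..<n}" "n div 2 \<le> card Y" for Y
    using clear_blocks_partial_input[OF m(1) x that(1)] that(2) \<open>even n\<close>
    by (intro vanishes_on_partial_input[OF m \<open>even n\<close> assms(4) P P_X0]) auto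
  then have "P (clear_blocks m x (\<lambda>j. j \<in> {})) = 0"
    using deg_le_vanishing[OF deg_le_clear_blocks[OF P, of m x], of "{..<n}" "n div 2" "{}"]
      \<open>2 * d \<le> n\<close> by (simp add: d_le_half)
  moreover have "clear_blocks m x (\<lambda>j. j \<in> {}) = x" by (simp add: fun_eq_iff clear_blocks_def)
  ultimately show ?thesis by simp
qed

lemma X1_witness:
  assumes "0 < m"
  shows "(\<lambda>p. p mod (2*m) < m) \<in> X1 m n"
proof -
  have blk: "block m (\<lambda>p. p mod (2*m) < m) j i = (i < m)" if "i < 2*m" for i j
    using block_index_divmod[OF assms that] by (simp add: block_def)
  then have "{i. i < m \<and> block m (\<lambda>p. p mod (2*m) < m) j i} = {..<m}" for j by auto
  then show ?thesis using blk by (simp add: X1_def inA_def)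
qed

lemma nq_algorithm_lower_bound:
  assumes m: "0 < m" "even m" and n: "0 < n" "even n"
    and alg: "nq_algorithm (2*m*n) T (X0 m n) (X1 m n)"
  shows "min (n div 2) (m div 2) < T"
proof (rule ccontr)
  assume "\<not> ?thesis"
  then have T: "2 * T \<le> m" "2 * T \<le> n" using m n by auto
  obtain W U0 Us S where len: "length Us = T" and S: "S \<subseteq> basis_set (2*m*n) W"
    and acc1: "\<forall>x\<in>X1 m n. accept_prob (basis_set (2*m*n) W) x U0 Us S > 0"
    and acc0: "\<forall>x\<in>X0 m n. accept_prob (basis_set (2*m*n) W) x U0 Us S = 0"
    using alg unfolding nq_algorithm_def by blast
  let ?B = "basis_set (2*m*n) W" and ?x = "\<lambda>p. p mod (2*m) < m"
  have "finite ?B" by (simp add: basis_set_def)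
  then have "finite S" using S finite_subset by blast
  have "accept_prob ?B ?x U0 Us S > 0" using acc1 X1_witness[OF m(1)] by blast
  then obtain a where a: "a \<in> S" "final_state ?B ?x U0 Us a \<noteq> 0"
    unfolding accept_prob_def
    by (metis (mono_tags, lifting) norm_zero power_zero_numeral sum.neutral less_irrefl)
  have "final_state ?B x U0 Us a = 0" if "x \<in> X0 m n" for x
    using acc0 that a(1) \<open>finite S\<close> by (simp add: accept_prob_def sum_nonneg_eq_0_iff)
  then have "final_state ?B ?x U0 Us a = 0"
    using vanishes_on_X1[OF m n(2) T deg_le_final_state[OF \<open>finite ?B\<close>, where Us=Us, unfolded len]]
      X1_witness[OF m(1)] by simp
  with a(2) show False ..
qed

section \<open>Sum-of-products algorithms\<close>

lemma run_queries_append: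
  "run_queries B x (Us1 @ Us2) v = run_queries B x Us2 (run_queries B x Us1 v)"
  by (induction Us1 arbitrary: v) auto

definition perm_op :: "(basis \<Rightarrow> basis) \<Rightarrow> basis \<Rightarrow> basis \<Rightarrow> complex" where
  "perm_op \<pi> a b = (if a = \<pi> b then 1 else 0)"

lemma unitary_on_perm_op:
  assumes "finite B" and inv: "\<And>a. \<pi> (\<pi> a) = a" and closed: "\<And>a. a \<in> B \<Longrightarrow> \<pi> a \<in> B"
  shows "unitary_on B (perm_op \<pi>)"
  unfolding unitary_on_def
proof (intro ballI)
  fix a b assume a: "a \<in> B" and "b \<in> B"
  have "(\<Sum>c\<in>B. cnj (perm_op \<pi> c a) * perm_op \<pi> c b)
      = (\<Sum>c\<in>B. if c = \<pi> a then (if \<pi> a = \<pi> b then 1 else 0) else 0)"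
    by (rule sum.cong) (auto simp: perm_op_def)
  also have "\<dots> = (if \<pi> a = \<pi> b then 1 else 0)" using closed[OF a] \<open>finite B\<close> by simp
  also have "\<dots> = (if a = b then 1 else 0)" by (metis inv)
  finally show "(\<Sum>c\<in>B. cnj (perm_op \<pi> c a) * perm_op \<pi> c b) = (if a = b then 1 else 0)" .
qed

lemma apply_perm_op:
  assumes "finite B" and inv: "\<And>a. \<pi> (\<pi> a) = a" and closed: "\<And>a. a \<in> B \<Longrightarrow> \<pi> a \<in> B"
    and "a \<in> B"
  shows "apply_op (perm_op \<pi>) B v a = v (\<pi> a)"
proof -
  have "a = \<pi> b \<longleftrightarrow> b = \<pi> a" for b by (metis inv)
  then have "perm_op \<pi> a b * v b = (if b = \<pi> a then v b else 0)" for b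
    by (simp add: perm_op_def)
  then have "apply_op (perm_op \<pi>) B v a = (\<Sum>b\<in>B. if b = \<pi> a then v b else 0)"
    by (simp add: apply_op_def)
  also have "\<dots> = v (\<pi> a)" using closed[OF \<open>a \<in> B\<close>] \<open>finite B\<close> by simp
  finally show ?thesis .
qed

text \<open>The reflection I - w w^T with w = e - u, where e is a basis vector and u a real unit
  vector orthogonal to it; it exchanges e and u.\<close>
definition reflection_op :: "(basis \<Rightarrow> real) \<Rightarrow> basis \<Rightarrow> basis \<Rightarrow> basis \<Rightarrow> complex" where
  "reflection_op u e a b = complex_of_real ((if a = b then 1 else 0) -
      ((if a = e then 1 else 0) - u a) * ((if b = e then 1 else 0) - u b))"

lemma unitary_on_reflection_op:
  assumes "finite B" and "e \<in> B" and "u e = 0" and unit: "(\<Sum>c\<in>B. (u c)\<^sup>2) = 1"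
  shows "unitary_on B (reflection_op u e)"
  unfolding unitary_on_def
proof (intro ballI)
  fix a b assume "a \<in> B" and "b \<in> B"
  define w where "w c = (if c = e then 1 else 0) - u c" for c
  have "(\<Sum>c\<in>B. w c * w c)
      = (\<Sum>c\<in>B. (if c = e then 1 else 0) - 2 * (if c = e then u c else 0) + (u c)\<^sup>2)"
    by (rule sum.cong) (auto simp: w_def power2_eq_square algebra_simps)
  also have "\<dots> = 2"
    using assms by (simp add: sum.distrib sum_subtractf sum_distrib_left[symmetric])
  finally have ww: "(\<Sum>c\<in>B. w c * w c) = 2" .
  let ?S = "\<Sum>c\<in>B. ((if c = a then 1 else 0) - w c * w a) * ((if c = b then 1 else 0) - w c * w b)"
  have "?S = (\<Sum>c\<in>B. (if c = a then (if a = b then 1 else 0) else 0)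
      - (if c = b then w b * w a else 0) - (if c = a then w a * w b else 0) + w a * w b * (w c * w c))"
    by (rule sum.cong) (auto simp: algebra_simps)
  also have "\<dots> = (if a = b then 1 else 0)"
    using \<open>finite B\<close> \<open>a \<in> B\<close> \<open>b \<in> B\<close> ww
    by (simp add: sum.distrib sum_subtractf sum_distrib_left[symmetric])
  finally have "?S = (if a = b then 1 else 0)" .
  moreover have "(\<Sum>c\<in>B. cnj (reflection_op u e c a) * reflection_op u e c b) = complex_of_real ?S"
    by (simp add: reflection_op_def w_def)
  ultimately show
    "(\<Sum>c\<in>B. cnj (reflection_op u e c a) * reflection_op u e c b) = (if a = b then 1 else 0)"
    by simp
qed

lemma reflection_op_col: "u e = 0 \<Longrightarrow> reflection_op u e a e = complex_of_real (u a)"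
  by (simp add: reflection_op_def)

lemma reflection_op_row: "u e = 0 \<Longrightarrow> reflection_op u e e b = complex_of_real (u b)"
  by (simp add: reflection_op_def)

lemma sum_if_in_image:
  assumes "finite B" and "inj_on q {..<M}" and "\<And>k. k < M \<Longrightarrow> q k \<in> B"
  shows "(\<Sum>a\<in>B. if \<exists>k<M. a = q k then f a else 0) = (\<Sum>k<M. f (q k))"
proof -
  have "(\<Sum>a\<in>B. if \<exists>k<M. a = q k then f a else 0) = (\<Sum>a\<in>B \<inter> q ` {..<M}. f a)"
    using \<open>finite B\<close> by (simp add: sum.inter_restrict image_iff Bex_def)
  also have "B \<inter> q ` {..<M} = q ` {..<M}" using assms(3) by auto
  finally show ?thesis using assms(2) by (simp add: sum.reindex)
qed

definition put_bit :: "nat \<Rightarrow> bool \<Rightarrow> nat \<Rightarrow> nat" where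
  "put_bit t b r = (if b then set_bit t r else unset_bit t r)"

lemma bit_put_bit: "bit (put_bit t b r) n \<longleftrightarrow> (if n = t then b else bit r n)"
  by (auto simp: put_bit_def bit_set_bit_iff bit_unset_bit_iff)

lemma put_bit_involution: "put_bit t (bit r t) (put_bit t b r) = r"
  by (rule bit_eqI) (simp add: bit_put_bit)

lemma put_bit_less:
  assumes "r < 2 ^ d" and "t < d"
  shows "put_bit t b r < 2 ^ d"
proof -
  have "take_bit d r = r" using assms(1) by (simp add: take_bit_nat_eq_self_iff)
  then have "take_bit d (put_bit t b r) = put_bit t b r"
    using assms(2) by (simp add: put_bit_def take_bit_set_bit_eq take_bit_unset_bit_eq)
  then show ?thesis by (simp add: take_bit_nat_eq_self_iff)
qed

lemma put_bit_same: "\<not> bit r t \<Longrightarrow> put_bit t False r = r"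
  by (rule bit_eqI) (auto simp: bit_put_bit)

text \<open>A d-query algorithm whose acceptance probability is proportional to (F x)^2. It prepares
  the uniform superposition over the terms k, queries s k 0, ..., s k (d - 1) in turn, and
  between queries a permutation of the basis moves the answer into bit t of a record register
  r (kept next to k in the workspace, whose value 0 stays free for e0) while advancing the index
  register from s k t to s k (t + 1). A final reflection exchanging e0 with the normalised weight
  vector leaves at e0 the inner product of the state with the weights, a multiple of F x.\<close>
locale sum_of_products_algorithm =
  fixes N d M :: nat and s :: "nat \<Rightarrow> nat \<Rightarrow> nat" and g :: "nat \<Rightarrow> nat \<Rightarrow> bool \<Rightarrow> real"
  assumes N_pos: "0 < N" and d_pos: "0 < d" and M_pos: "0 < M"
    and s_less: "\<And>k t. k < M \<Longrightarrow> t < d \<Longrightarrow> s k t < N"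
begin

definition F :: "(nat \<Rightarrow> bool) \<Rightarrow> real" where
  "F x = (\<Sum>k<M. \<Prod>t<d. g k t (x (s k t)))"

definition "R = (2::nat) ^ d"
definition "W = 1 + M * R"
definition "B = basis_set N W"
definition "enc k r = 1 + k * R + r"
definition "e0 = (0::nat, False, 0::nat)"

lemma R_pos: "0 < R"
  by (simp add: R_def)

lemma finite_B: "finite B"
  by (simp add: B_def basis_set_def)

lemma e0_in_B: "e0 \<in> B"
  using N_pos by (simp add: e0_def B_def basis_set_def W_def)

lemma enc_decode: "r < R \<Longrightarrow> (enc k r - 1) div R = k \<and> (enc k r - 1) mod R = r \<and> 1 \<le> enc k r"
  using R_pos by (simp add: enc_def)

lemma enc_less_W: "k < M \<Longrightarrow> r < R \<Longrightarrow> enc k r < W"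
proof -
  assume "k < M" "r < R"
  then have "k * R + r < (k + 1) * R" by simp
  also have "\<dots> \<le> M * R" using \<open>k < M\<close> by (intro mult_right_mono) auto
  finally show ?thesis by (simp add: enc_def W_def)
qed

lemma enc_inject: "r < R \<Longrightarrow> r' < R \<Longrightarrow> enc k r = enc k' r' \<Longrightarrow> k = k' \<and> r = r'"
  using enc_decode by metis

fun answers :: "nat \<Rightarrow> nat \<Rightarrow> (nat \<Rightarrow> bool) \<Rightarrow> nat" where
  "answers k 0 x = 0"
| "answers k (Suc t) x = put_bit t (x (s k t)) (answers k t x)"

lemma bit_answers: "bit (answers k t x) n \<longleftrightarrow> n < t \<and> x (s k n)"
  by (induction t) (auto simp: bit_put_bit less_Suc_eq)

lemma answers_less_R: "t \<le> d \<Longrightarrow> answers k t x < R"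
proof (induction t)
  case (Suc t)
  then show ?case by (simp add: put_bit_less R_def)
qed (simp add: R_pos)

definition step_perm :: "nat \<Rightarrow> basis \<Rightarrow> basis" where
  "step_perm t a = (case a of (i, b, z) \<Rightarrow>
     (if 1 \<le> z \<and> (z - 1) div R < M then
        (let k = (z - 1) div R; r = (z - 1) mod R in
          (transpose (s k t) (s k (Suc t)) i, bit r t, enc k (put_bit t b r)))
      else (i, b, z)))"

lemma step_perm_enc:
  assumes "k < M" and "r < R"
  shows "step_perm t (i, b, enc k r)
    = (transpose (s k t) (s k (Suc t)) i, bit r t, enc k (put_bit t b r))"
  using enc_decode[OF assms(2)] assms(1) by (simp add: step_perm_def Let_def)

lemma step_perm_involution:
  assumes "t < d"
  shows "step_perm t (step_perm t a) = a"
proof -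
  obtain i b z where a: "a = (i, b, z)" by (cases a)
  show ?thesis
  proof (cases "1 \<le> z \<and> (z - 1) div R < M")
    case True
    define k r where "k = (z - 1) div R" and "r = (z - 1) mod R"
    have "k < M" and "r < R" using True R_pos by (simp_all add: k_def r_def)
    moreover have "put_bit t b r < R" using \<open>r < R\<close> assms put_bit_less by (simp add: R_def)
    moreover have "a = (i, b, enc k r)" using True by (simp add: a enc_def k_def r_def)
    ultimately show ?thesis by (simp add: step_perm_enc bit_put_bit put_bit_involution)
  next
    case False
    have "step_perm t a = a" unfolding step_perm_def a prod.case if_not_P[OF False] ..
    then show ?thesis by simp
  qed
qed

lemma step_perm_in_B:
  assumes "Suc t < d" and "a \<in> B"
  shows "step_perm t a \<in> B"
proof -
  obtain i b z where a: "a = (i, b, z)" by (cases a)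
  have "i < N" using assms(2) by (simp add: a B_def basis_set_def)
  show ?thesis
  proof (cases "1 \<le> z \<and> (z - 1) div R < M")
    case True
    define k r where "k = (z - 1) div R" and "r = (z - 1) mod R"
    have "k < M" using True by (simp add: k_def)
    have "r < R" using R_pos by (simp add: r_def)
    then have "put_bit t b r < R" using assms(1) put_bit_less by (simp add: R_def)
    moreover have "a = (i, b, enc k r)" using True by (simp add: a enc_def k_def r_def)
    moreover have "transpose (s k t) (s k (Suc t)) i < N"
      using s_less[OF \<open>k < M\<close>] assms(1) \<open>i < N\<close> by (simp add: transpose_def)
    ultimately show ?thesis
      using \<open>k < M\<close> \<open>r < R\<close> enc_less_W by (simp add: step_perm_enc B_def basis_set_def)
  next
    case False
    have "step_perm t a = a" unfolding step_perm_def a prod.case if_not_P[OF False] ..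
    then show ?thesis using assms(2) by simp
  qed
qed

definition pre_query :: "nat \<Rightarrow> (nat \<Rightarrow> bool) \<Rightarrow> nat \<Rightarrow> basis" where
  "pre_query t x k = (s k t, False, enc k (answers k t x))"

definition post_query :: "nat \<Rightarrow> (nat \<Rightarrow> bool) \<Rightarrow> nat \<Rightarrow> basis" where
  "post_query t x k = (s k t, x (s k t), enc k (answers k t x))"

lemma step_perm_post_query:
  assumes "Suc t < d" and "k < M"
  shows "step_perm t (post_query t x k) = pre_query (Suc t) x k"
proof -
  have "answers k t x < R" using answers_less_R assms(1) by simp
  moreover have "\<not> bit (answers k t x) t" by (simp add: bit_answers)
  ultimately show ?thesis
    using assms(2) by (simp add: post_query_def pre_query_def step_perm_enc put_bit_same)
qed

lemma pre_query_in_B: "t < d \<Longrightarrow> k < M \<Longrightarrow> pre_query t x k \<in> B"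
  using s_less enc_less_W answers_less_R by (simp add: pre_query_def B_def basis_set_def)

lemma post_query_in_B: "t < d \<Longrightarrow> k < M \<Longrightarrow> post_query t x k \<in> B"
  using s_less enc_less_W answers_less_R by (simp add: post_query_def B_def basis_set_def)

lemma inj_on_pre_query:
  assumes "t \<le> d"
  shows "inj_on (pre_query t x) {..<M}"
proof (rule inj_onI)
  fix k k' assume "pre_query t x k = pre_query t x k'"
  then have "enc k (answers k t x) = enc k' (answers k' t x)" by (simp add: pre_query_def)
  then show "k = k'" using enc_inject[OF answers_less_R[OF assms] answers_less_R[OF assms]] by blast
qed

lemma inj_on_post_query:
  assumes "t \<le> d"
  shows "inj_on (post_query t x) {..<M}"
proof (rule inj_onI)
  fix k k' assume "post_query t x k = post_query t x k'"
  then have "enc k (answers k t x) = enc k' (answers k' t x)" by (simp add: post_query_def)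
  then show "k = k'" using enc_inject[OF answers_less_R[OF assms] answers_less_R[OF assms]] by blast
qed

definition "amp = 1 / sqrt (real M)"

definition state :: "nat \<Rightarrow> (nat \<Rightarrow> bool) \<Rightarrow> basis \<Rightarrow> complex" where
  "state t x a = (if a \<in> B \<and> (\<exists>k<M. a = pre_query t x k) then complex_of_real amp else 0)"

lemma query_op_state:
  assumes "a \<in> B" and "\<And>a. a \<in> B \<Longrightarrow> v a = state t x a"
  shows "query_op x v a = (if \<exists>k<M. a = post_query t x k then complex_of_real amp else 0)"
proof -
  obtain i b z where a: "a = (i, b, z)" by (cases a)
  have "(i, b \<noteq> x i, z) \<in> B" using assms(1) by (simp add: a B_def basis_set_def)
  then have "query_op x v a = state t x (i, b \<noteq> x i, z)"
    using assms(2) by (simp add: a query_op_def)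
  also have "\<dots> = (if \<exists>k<M. a = post_query t x k then complex_of_real amp else 0)"
    using \<open>(i, b \<noteq> x i, z) \<in> B\<close> by (auto simp: state_def a pre_query_def post_query_def)
  finally show ?thesis .
qed

lemma step_state:
  assumes "Suc t < d" and "\<And>a. a \<in> B \<Longrightarrow> v a = state t x a" and "a \<in> B"
  shows "apply_op (perm_op (step_perm t)) B (query_op x v) a = state (Suc t) x a"
proof -
  have "t < d" using assms(1) by simp
  have "apply_op (perm_op (step_perm t)) B (query_op x v) a = query_op x v (step_perm t a)"
    using step_perm_involution[OF \<open>t < d\<close>] step_perm_in_B[OF assms(1)]
    by (rule apply_perm_op[OF finite_B _ _ assms(3)])
  also have "\<dots> = (if \<exists>k<M. step_perm t a = post_query t x k then complex_of_real amp else 0)"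
    by (rule query_op_state[OF step_perm_in_B[OF assms(1,3)] assms(2)])
  also have "(\<exists>k<M. step_perm t a = post_query t x k) \<longleftrightarrow> (\<exists>k<M. a = pre_query (Suc t) x k)"
    using step_perm_post_query[OF assms(1)] step_perm_involution[OF \<open>t < d\<close>] by metis
  finally show ?thesis using assms(3) by (simp add: state_def)
qed

definition init_vec :: "basis \<Rightarrow> real" where
  "init_vec a = (if a \<in> B \<and> (\<exists>k<M. a = pre_query 0 (\<lambda>_. False) k) then amp else 0)"

lemma init_vec_e0: "init_vec e0 = 0"
  by (auto simp: init_vec_def e0_def pre_query_def enc_def)

lemma init_vec_norm: "(\<Sum>a\<in>B. (init_vec a)\<^sup>2) = 1"
proof -
  have "(\<Sum>a\<in>B. (init_vec a)\<^sup>2) = (\<Sum>a\<in>B. if \<exists>k<M. a = pre_query 0 (\<lambda>_. False) k then amp\<^sup>2 else 0)"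
    by (rule sum.cong) (auto simp: init_vec_def)
  also have "\<dots> = (\<Sum>k<M. amp\<^sup>2)"
    by (rule sum_if_in_image[OF finite_B inj_on_pre_query pre_query_in_B]) (use d_pos in auto)
  also have "\<dots> = 1" using M_pos by (simp add: amp_def power_divide)
  finally show ?thesis .
qed

definition "U_init = reflection_op init_vec e0"

lemma apply_U_init: "apply_op U_init B init_state a = complex_of_real (init_vec a)"
proof -
  have "apply_op U_init B init_state a = (\<Sum>b\<in>B. if b = e0 then U_init a b else 0)"
    unfolding apply_op_def by (rule sum.cong) (auto simp: init_state_def e0_def)
  also have "\<dots> = complex_of_real (init_vec a)"
    using finite_B e0_in_B by (simp add: U_init_def reflection_op_col init_vec_e0)
  finally show ?thesis .
qed

definition "Us_steps t = map (\<lambda>t. perm_op (step_perm t)) [0..<t]"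

lemma run_queries_state:
  "t < d \<Longrightarrow> a \<in> B \<Longrightarrow> run_queries B x (Us_steps t) (apply_op U_init B init_state) a = state t x a"
proof (induction t arbitrary: a)
  case 0
  then show ?case by (auto simp: Us_steps_def apply_U_init init_vec_def state_def pre_query_def)
next
  case (Suc t)
  have "run_queries B x (Us_steps (Suc t)) (apply_op U_init B init_state) a
      = apply_op (perm_op (step_perm t)) B
          (query_op x (run_queries B x (Us_steps t) (apply_op U_init B init_state))) a"
    by (simp add: Us_steps_def run_queries_append)
  also have "\<dots> = state (Suc t) x a"
    by (rule step_state[OF Suc.prems(1) _ Suc.prems(2)]) (use Suc in simp)
  finally show ?case .
qed

text \<open>On the state of term k after the last query, with the earlier answers recorded in r and
  the last one in b, the weight is the product of the g k t at these answers.\<close>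
definition weight :: "basis \<Rightarrow> real" where
  "weight a = (case a of (i, b, z) \<Rightarrow>
     if a \<in> B \<and> 1 \<le> z \<and> i = s ((z - 1) div R) (d - 1)
     then (\<Prod>t<d - 1. g ((z - 1) div R) t (bit ((z - 1) mod R) t)) * g ((z - 1) div R) (d - 1) b
     else 0)"

definition "weight_norm = sqrt (\<Sum>a\<in>B. (weight a)\<^sup>2)"

definition "unit_weight a = weight a / weight_norm"

lemma weight_post_query:
  assumes "k < M"
  shows "weight (post_query (d - 1) x k) = (\<Prod>t<d. g k t (x (s k t)))"
proof -
  have "answers k (d - 1) x < R" using answers_less_R by simp
  moreover have "post_query (d - 1) x k \<in> B" using post_query_in_B assms d_pos by simp
  moreover have "(\<Prod>t<d - 1. g k t (bit (answers k (d - 1) x) t)) = (\<Prod>t<d - 1. g k t (x (s k t)))"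
    by (rule prod.cong) (auto simp: bit_answers)
  moreover have "(\<Prod>t<d. g k t (x (s k t)))
      = (\<Prod>t<d - 1. g k t (x (s k t))) * g k (d - 1) (x (s k (d - 1)))"
    using prod.lessThan_Suc[of "\<lambda>t. g k t (x (s k t))" "d - 1"] d_pos by simp
  ultimately show ?thesis
    using enc_decode by (simp add: weight_def post_query_def)
qed

lemma weight_e0: "weight e0 = 0"
  by (simp add: weight_def e0_def)

lemma weight_norm_pos:
  assumes "F x \<noteq> 0"
  shows "weight_norm > 0"
proof -
  obtain k where k: "k < M" "(\<Prod>t<d. g k t (x (s k t))) \<noteq> 0"
    using assms unfolding F_def by (meson sum.neutral lessThan_iff)
  then have "weight (post_query (d - 1) x k) \<noteq> 0" using weight_post_query[OF k(1)] by simp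
  moreover have "post_query (d - 1) x k \<in> B" using post_query_in_B k d_pos by simp
  ultimately have "(\<Sum>a\<in>B. (weight a)\<^sup>2) \<noteq> 0"
    using sum_nonneg_eq_0_iff[OF finite_B, of "\<lambda>a. (weight a)\<^sup>2"] by auto
  moreover have "(\<Sum>a\<in>B. (weight a)\<^sup>2) \<ge> 0" by (simp add: sum_nonneg)
  ultimately show ?thesis unfolding weight_norm_def by simp
qed

lemma unit_weight_norm:
  assumes "weight_norm > 0"
  shows "(\<Sum>a\<in>B. (unit_weight a)\<^sup>2) = 1"
proof -
  have "(\<Sum>a\<in>B. (unit_weight a)\<^sup>2) = (\<Sum>a\<in>B. (weight a)\<^sup>2) / weight_norm\<^sup>2"
    by (simp add: unit_weight_def power_divide sum_divide_distrib)
  also have "weight_norm\<^sup>2 = (\<Sum>a\<in>B. (weight a)\<^sup>2)"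
    unfolding weight_norm_def by (simp add: sum_nonneg)
  finally show ?thesis using assms unfolding weight_norm_def by simp
qed

definition "Us_alg = Us_steps (d - 1) @ [reflection_op unit_weight e0]"

lemma final_state_e0:
  "final_state B x U_init Us_alg e0 = complex_of_real (F x * (amp / weight_norm))"
proof -
  define v where "v = run_queries B x (Us_steps (d - 1)) (apply_op U_init B init_state)"
  have v: "\<And>a. a \<in> B \<Longrightarrow> v a = state (d - 1) x a"
    using run_queries_state d_pos unfolding v_def by simp
  have row: "reflection_op unit_weight e0 e0 b = complex_of_real (unit_weight b)" for b
    by (rule reflection_op_row) (simp add: unit_weight_def weight_e0)
  have "final_state B x U_init Us_alg e0
      = apply_op (reflection_op unit_weight e0) B (query_op x v) e0"
    by (simp add: final_state_def Us_alg_def run_queries_append v_def)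
  also have "\<dots> = (\<Sum>b\<in>B. if \<exists>k<M. b = post_query (d - 1) x k
                            then complex_of_real (unit_weight b * amp) else 0)"
    unfolding apply_op_def by (rule sum.cong[OF refl]) (auto simp: row query_op_state[OF _ v])
  also have "\<dots> = complex_of_real (\<Sum>k<M. unit_weight (post_query (d - 1) x k) * amp)"
    by (subst sum_if_in_image[OF finite_B inj_on_post_query post_query_in_B]) (use d_pos in auto)
  also have "(\<Sum>k<M. unit_weight (post_query (d - 1) x k) * amp)
      = (\<Sum>k<M. (\<Prod>t<d. g k t (x (s k t))) * (amp / weight_norm))"
    by (rule sum.cong) (simp_all add: unit_weight_def weight_post_query[simplified])
  finally show ?thesis by (simp only: F_def sum_distrib_right)
qed

lemma accept_prob_Us_alg:
  "accept_prob B x U_init Us_alg {e0} = (amp / weight_norm)\<^sup>2 * (F x)\<^sup>2"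
  by (simp add: accept_prob_def final_state_e0 power_mult_distrib power_divide norm_mult
      norm_divide)

lemma unitary_on_Us_alg:
  assumes "weight_norm > 0" and "U \<in> set Us_alg"
  shows "unitary_on B U"
proof -
  have "unit_weight e0 = 0" by (simp add: unit_weight_def weight_e0)
  then have "unitary_on B (reflection_op unit_weight e0)"
    using unitary_on_reflection_op[OF finite_B e0_in_B _ unit_weight_norm[OF assms(1)]] by blast
  moreover have "unitary_on B (perm_op (step_perm t))" if "Suc t < d" for t
    using that by (intro unitary_on_perm_op[OF finite_B step_perm_involution step_perm_in_B]) auto
  ultimately show ?thesis
    using assms(2) by (auto simp: Us_alg_def Us_steps_def)
qed

lemma nq_algorithm_if_F_separates:
  assumes F1: "\<And>x. x \<in> Xone \<Longrightarrow> F x \<noteq> 0" and F0: "\<And>x. x \<in> Xzero \<Longrightarrow> F x = 0"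
    and "x1 \<in> Xone"
  shows "nq_algorithm N d Xzero Xone"
  unfolding nq_algorithm_def
proof (intro exI[of _ W] exI[of _ U_init] exI[of _ Us_alg] exI[of _ "{e0}"] conjI ballI)
  have pos: "weight_norm > 0" by (rule weight_norm_pos[OF F1[OF \<open>x1 \<in> Xone\<close>]])
  show "W > 0" by (simp add: W_def)
  show "length Us_alg = d" using d_pos by (simp add: Us_alg_def Us_steps_def)
  show "unitary_on (basis_set N W) U_init"
    unfolding U_init_def B_def[symmetric]
    by (rule unitary_on_reflection_op[OF finite_B e0_in_B init_vec_e0 init_vec_norm])
  show "unitary_on (basis_set N W) U" if "U \<in> set Us_alg" for U
    unfolding B_def[symmetric] by (rule unitary_on_Us_alg[OF pos that])
  show "{e0} \<subseteq> basis_set N W" using e0_in_B by (simp add: B_def)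
  show "accept_prob (basis_set N W) x U_init Us_alg {e0} > 0" if "x \<in> Xone" for x
    using pos M_pos F1[OF that] by (simp add: accept_prob_Us_alg[unfolded B_def] amp_def)
  show "accept_prob (basis_set N W) x U_init Us_alg {e0} = 0" if "x \<in> Xzero" for x
    using F0[OF that] by (simp add: accept_prob_Us_alg[unfolded B_def])
qed

end

lemma nq_algorithm_of_sum_of_products:
  fixes K :: "'k set" and s :: "'k \<Rightarrow> nat \<Rightarrow> nat" and g :: "'k \<Rightarrow> nat \<Rightarrow> bool \<Rightarrow> real"
  assumes "0 < N" and "0 < d" and "finite K" and "K \<noteq> {}"
    and s: "\<And>\<kappa> t. \<kappa> \<in> K \<Longrightarrow> t < d \<Longrightarrow> s \<kappa> t < N"
    and F1: "\<And>x. x \<in> Xone \<Longrightarrow> (\<Sum>\<kappa>\<in>K. \<Prod>t<d. g \<kappa> t (x (s \<kappa> t))) \<noteq> 0"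
    and F0: "\<And>x. x \<in> Xzero \<Longrightarrow> (\<Sum>\<kappa>\<in>K. \<Prod>t<d. g \<kappa> t (x (s \<kappa> t))) = 0"
    and "x1 \<in> Xone"
  shows "nq_algorithm N d Xzero Xone"
proof -
  obtain e where e: "bij_betw e {..<card K} K"
    using ex_bij_betw_nat_finite[OF \<open>finite K\<close>] by (auto simp: lessThan_atLeast0)
  interpret A: sum_of_products_algorithm N d "card K" "\<lambda>k. s (e k)" "\<lambda>k. g (e k)"
  proof
    show "0 < card K" using \<open>finite K\<close> \<open>K \<noteq> {}\<close> by (simp add: card_gt_0_iff)
    show "s (e k) t < N" if "k < card K" and "t < d" for k t
      using s[OF bij_betw_apply[OF e] that(2)] that(1) by simp
  qed (fact assms)+
  have F: "A.F x = (\<Sum>\<kappa>\<in>K. \<Prod>t<d. g \<kappa> t (x (s \<kappa> t)))" for x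
    unfolding A.F_def by (rule sum.reindex_bij_betw[OF e])
  show ?thesis
    by (rule A.nq_algorithm_if_F_separates[OF _ _ \<open>x1 \<in> Xone\<close>]) (simp_all add: F F0 F1)
qed

section \<open>The upper bounds\<close>

definition first_half_weight :: "nat \<Rightarrow> (nat \<Rightarrow> bool) \<Rightarrow> nat \<Rightarrow> nat" where
  "first_half_weight m x j = card {i. i < m \<and> x (2*m*j + i)}"

lemma first_half_weight_A0:
  assumes "inA m False (block m x j)"
  shows "m \<le> 2 * first_half_weight m x j" and "first_half_weight m x j \<le> m"
proof -
  show "m \<le> 2 * first_half_weight m x j"
    using assms by (simp add: inA_def block_def first_half_weight_def)
  have "first_half_weight m x j \<le> card {..<m}"
    unfolding first_half_weight_def by (rule card_mono) auto
  then show "first_half_weight m x j \<le> m" by simp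
qed

lemma first_half_weight_A1: "inA m True (block m x j) \<Longrightarrow> first_half_weight m x j = 0"
  by (simp add: inA_def block_def first_half_weight_def)

lemma sum_of_bool_first_half:
  "(\<Sum>i<m. of_bool (x (2*m*j + i))) = (of_nat (first_half_weight m x j) :: 'a::semiring_1)"
proof -
  have "{..<m} \<inter> {i. x (2*m*j + i)} = {i. i < m \<and> x (2*m*j + i)}" by auto
  then show ?thesis by (simp add: first_half_weight_def)
qed

lemma position_less: "j < n \<Longrightarrow> i < m \<Longrightarrow> 2*m*j + i < 2*m*(n::nat)"
proof -
  assume "j < n" "i < m"
  then have "2*m*j + i < 2*m*(j + 1)" by simp
  also have "\<dots> \<le> 2*m*n" using \<open>j < n\<close> by (intro mult_le_mono2) simp
  finally show ?thesis .
qed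

lemma ex_less_half_if_card_half:
  assumes "2 * card {j. j < n \<and> y j} = n" and "0 < n"
  shows "\<exists>t < n div 2 + 1. y t"
proof (rule ccontr)
  assume "\<not> ?thesis"
  then have "{j. j < n \<and> y j} \<subseteq> {n div 2 + 1..<n}" by (auto simp: not_less)
  then have "card {j. j < n \<and> y j} \<le> n - (n div 2 + 1)"
    using card_mono[of "{n div 2 + 1..<n}"] by fastforce
  then show False using assms by presburger
qed

lemma prod_first_half_weight_X1:
  assumes "0 < m" and "x \<in> X1 m n" and "d \<le> n"
  shows "(\<Prod>t<d. real (first_half_weight m x t)) > 0"
proof (rule prod_pos)
  fix t assume "t \<in> {..<d}"
  then have "m \<le> 2 * first_half_weight m x t"
    using first_half_weight_A0(1) assms(2,3) by (simp add: X1_def)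
  then show "real (first_half_weight m x t) > 0" using assms(1) by simp
qed

lemma prod_first_half_weight_X0:
  assumes "x \<in> X0 m n" and "0 < n"
  shows "(\<Prod>t<n div 2 + 1. real (first_half_weight m x t)) = 0"
proof -
  obtain y where y: "2 * card {j. j < n \<and> y j} = n" "\<forall>j<n. inA m (y j) (block m x j)"
    using assms(1) by (auto simp: X0_def)
  then obtain t where "t < n div 2 + 1" "y t" using ex_less_half_if_card_half assms(2) by blast
  have "t < n" using \<open>t < n div 2 + 1\<close> assms(2) y(1) by presburger
  then have "inA m True (block m x t)" using y(2) \<open>y t\<close> by (metis (full_types))
  then have "first_half_weight m x t = 0" by (rule first_half_weight_A1)
  with \<open>t < n div 2 + 1\<close> have "\<exists>t\<in>{..<n div 2 + 1}. real (first_half_weight m x t) = 0"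
    by auto
  then show ?thesis by (rule prod_zero[rotated]) simp
qed

text \<open>The amplitude is the product of the first-half weights of blocks 0, ..., n/2, written as a sum
  over the choices of one position in each block. It is positive on X1, and on X0 one of these
  blocks lies in A_1.\<close>
lemma nq_algorithm_n_half:
  assumes "0 < m" and "even n" and "0 < n"
  shows "nq_algorithm (2*m*n) (n div 2 + 1) (X0 m n) (X1 m n)"
proof -
  define d where "d = n div 2 + 1"
  define K where "K = PiE {..<d} (\<lambda>_. {..<m})"
  define s where "s \<phi> t = 2*m*t + \<phi> t" for \<phi> :: "nat \<Rightarrow> nat" and t
  define g where "g (\<phi> :: nat \<Rightarrow> nat) (t :: nat) b = (of_bool b :: real)" for \<phi> t b
  have "d \<le> n" using assms(2,3) unfolding d_def by presburger
  have sum: "(\<Sum>\<phi>\<in>K. \<Prod>t<d. g \<phi> t (x (s \<phi> t))) = (\<Prod>t<d. real (first_half_weight m x t))" for x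
  proof -
    have "(\<Prod>t<d. real (first_half_weight m x t)) = (\<Prod>t<d. \<Sum>i<m. of_bool (x (2*m*t + i)))"
      by (simp add: sum_of_bool_first_half)
    also have "\<dots> = (\<Sum>\<phi>\<in>K. \<Prod>t<d. of_bool (x (2*m*t + \<phi> t)))"
      unfolding K_def by (rule prod_sum_PiE) auto
    finally show ?thesis by (simp add: g_def s_def)
  qed
  show ?thesis
    unfolding d_def[symmetric]
  proof (rule nq_algorithm_of_sum_of_products[where K = K and s = s and g = g])
    show "0 < 2*m*n" and "0 < d" and "finite K"
      using assms by (simp_all add: d_def K_def finite_PiE)
    show "K \<noteq> {}" using assms(1) by (auto simp: K_def PiE_eq_empty_iff)
    show "s \<phi> t < 2*m*n" if "\<phi> \<in> K" and "t < d" for \<phi> t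
      unfolding s_def using that \<open>d \<le> n\<close> by (intro position_less) (auto simp: K_def PiE_iff)
    show "(\<Sum>\<phi>\<in>K. \<Prod>t<d. g \<phi> t (x (s \<phi> t))) \<noteq> 0" if "x \<in> X1 m n" for x
      using prod_first_half_weight_X1[OF assms(1) that \<open>d \<le> n\<close>] sum[of x] by linarith
    show "(\<Sum>\<phi>\<in>K. \<Prod>t<d. g \<phi> t (x (s \<phi> t))) = 0" if "x \<in> X0 m n" for x
      using prod_first_half_weight_X0[OF that assms(3)] sum[of x] unfolding d_def by linarith
    show "(\<lambda>p. p mod (2*m) < m) \<in> X1 m n" by (rule X1_witness[OF assms(1)])
  qed
qed

definition interpolation :: "nat \<Rightarrow> real \<Rightarrow> real" where
  "interpolation m v = (\<Prod>t<m div 2 + 1. 1 - v / real (m div 2 + t))"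

lemma interpolation_A0:
  assumes "even m" and "0 < m" and "inA m False (block m x j)"
  shows "interpolation m (real (first_half_weight m x j)) = 0"
proof -
  let ?v = "first_half_weight m x j"
  have "m \<le> 2 * ?v" and "?v \<le> m" using first_half_weight_A0[OF assms(3)] by auto
  then have "?v - m div 2 \<in> {..<m div 2 + 1}" and "m div 2 + (?v - m div 2) = ?v" and "?v > 0"
    using assms(1,2) by auto
  then have "\<exists>t\<in>{..<m div 2 + 1}. 1 - real ?v / real (m div 2 + t) = 0"
    by (intro bexI[of _ "?v - m div 2"]) simp_all
  then show ?thesis unfolding interpolation_def by (intro prod_zero) simp_all
qed

lemma interpolation_A1:
  "inA m True (block m x j) \<Longrightarrow> interpolation m (real (first_half_weight m x j)) = 1"
  by (simp add: first_half_weight_A1 interpolation_def)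

lemma sum_interpolation_X1:
  assumes "even m" and "0 < m" and "x \<in> X1 m n"
  shows "(\<Sum>j<n. interpolation m (real (first_half_weight m x j))) = 0"
  using assms by (intro sum.neutral) (simp add: X1_def interpolation_A0)

lemma sum_interpolation_X0:
  assumes "even m" and "0 < m" and "x \<in> X0 m n"
  shows "(\<Sum>j<n. interpolation m (real (first_half_weight m x j))) = real n / 2"
proof -
  obtain y where y: "2 * card {j. j < n \<and> y j} = n" "\<forall>j<n. inA m (y j) (block m x j)"
    using assms(3) by (auto simp: X0_def)
  have "interpolation m (real (first_half_weight m x j)) = of_bool (y j)" if "j < n" for j
  proof -
    have "inA m (y j) (block m x j)" using y(2) that by blast
    then show ?thesis
      using assms(1,2) by (cases "y j") (simp_all add: interpolation_A0 interpolation_A1)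
  qed
  then have "(\<Sum>j<n. interpolation m (real (first_half_weight m x j))) = (\<Sum>j<n. of_bool (y j))"
    by (intro sum.cong) simp_all
  also have "\<dots> = real (card {j. j < n \<and> y j})"
    by (simp add: Int_def lessThan_def)
  also have "\<dots> = real n / 2"
    using arg_cong[OF y(1), of real] by simp
  finally show ?thesis .
qed

lemma sum_PiE_first_half:
  fixes d :: nat
  assumes "0 < m"
  shows "(\<Sum>\<phi>\<in>PiE {..<d} (\<lambda>_. {..<m}). \<Prod>t<d. 1 / real m * (1 - c t * of_bool (x (2*m*j + \<phi> t))))
    = (\<Prod>t<d. 1 - c t * real (first_half_weight m x j) / real m)"
proof -
  have "(\<Sum>i<m. 1 / real m * (1 - c t * of_bool (x (2*m*j + i))))
      = 1 - c t * real (first_half_weight m x j) / real m" for t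
  proof -
    have "(\<Sum>i<m. 1 / real m * (1 - c t * of_bool (x (2*m*j + i))))
        = 1 / real m * (\<Sum>i<m. 1 - c t * of_bool (x (2*m*j + i)))"
      by (rule sum_distrib_left[symmetric])
    also have "(\<Sum>i<m. 1 - c t * of_bool (x (2*m*j + i)))
        = real m - c t * real (first_half_weight m x j)"
      by (simp add: sum_subtractf sum_distrib_left[symmetric] sum_of_bool_first_half)
    finally show ?thesis using assms by (simp add: field_simps)
  qed
  then have "(\<Prod>t<d. 1 - c t * real (first_half_weight m x j) / real m)
      = (\<Prod>t<d. \<Sum>i<m. 1 / real m * (1 - c t * of_bool (x (2*m*j + i))))"
    by simp
  also have "\<dots>
      = (\<Sum>\<phi>\<in>PiE {..<d} (\<lambda>_. {..<m}). \<Prod>t<d. 1 / real m * (1 - c t * of_bool (x (2*m*j + \<phi> t))))"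
    by (rule prod_sum_PiE) auto
  finally show ?thesis ..
qed

text \<open>The amplitude is the sum over the blocks of the interpolation polynomial at the first-half
  weight, minus n/2. Expanding the products turns each summand into a sum over the choices of one
  position per factor.\<close>
lemma nq_algorithm_m_half:
  assumes "0 < m" and "even m" and "even n" and "0 < n"
  shows "nq_algorithm (2*m*n) (m div 2 + 1) (X0 m n) (X1 m n)"
proof -
  define d where "d = m div 2 + 1"
  define P where "P = PiE {..<d} (\<lambda>_. {..<m})"
  define K where "K = insert None (Some ` ({..<n} \<times> P))"
  define s where "s \<kappa> t = (case \<kappa> of None \<Rightarrow> 0 | Some (j, \<phi>) \<Rightarrow> 2*m*j + \<phi> t)"
    for \<kappa> :: "(nat \<times> (nat \<Rightarrow> nat)) option" and t :: nat
  define c where "c t = real m / real (m div 2 + t)" for t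
  define g where "g \<kappa> t b = (case \<kappa> of
      None \<Rightarrow> (if t = 0 then - (real n / 2) else 1)
    | Some _ \<Rightarrow> 1 / real m * (1 - c t * of_bool b))"
    for \<kappa> :: "(nat \<times> (nat \<Rightarrow> nat)) option" and t :: nat and b
  have "finite P" by (simp add: P_def finite_PiE)
  have sum: "(\<Sum>\<kappa>\<in>K. \<Prod>t<d. g \<kappa> t (x (s \<kappa> t)))
      = - (real n / 2) + (\<Sum>j<n. interpolation m (real (first_half_weight m x j)))" for x
  proof -
    have "(\<Prod>t<d. g None t (x (s None t))) = - (real n / 2)"
      unfolding d_def g_def by (simp add: prod.lessThan_Suc_shift del: prod.lessThan_Suc)
    moreover have "(\<Sum>\<phi>\<in>P. \<Prod>t<d. g (Some (j, \<phi>)) t (x (s (Some (j, \<phi>)) t)))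
        = interpolation m (real (first_half_weight m x j))" for j
      using sum_PiE_first_half[OF assms(1), where d = d and c = c and x = x and j = j] assms(1)
      by (simp add: P_def g_def s_def interpolation_def d_def c_def)
    moreover have "(\<Sum>\<kappa>\<in>Some ` ({..<n} \<times> P). \<Prod>t<d. g \<kappa> t (x (s \<kappa> t)))
        = (\<Sum>j<n. \<Sum>\<phi>\<in>P. \<Prod>t<d. g (Some (j, \<phi>)) t (x (s (Some (j, \<phi>)) t)))"
      by (simp add: sum.reindex sum.cartesian_product case_prod_beta)
    ultimately show ?thesis
      unfolding K_def using \<open>finite P\<close> by simp
  qed
  show ?thesis
    unfolding d_def[symmetric]
  proof (rule nq_algorithm_of_sum_of_products[where K = K and s = s and g = g])
    show "0 < 2*m*n" and "0 < d" and "finite K" and "K \<noteq> {}"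
      using assms \<open>finite P\<close> by (simp_all add: d_def K_def)
    show "s \<kappa> t < 2*m*n" if "\<kappa> \<in> K" and "t < d" for \<kappa> t
    proof (cases \<kappa>)
      case None
      then show ?thesis using assms(1,4) by (simp add: s_def)
    next
      case (Some j\<phi>)
      then obtain j \<phi> where \<kappa>: "\<kappa> = Some (j, \<phi>)" and "j < n" and "\<phi> \<in> P"
        using \<open>\<kappa> \<in> K\<close> by (auto simp: K_def)
      then have "\<phi> t < m" using \<open>t < d\<close> by (auto simp: P_def PiE_iff)
      then show ?thesis using \<open>j < n\<close> by (simp add: \<kappa> s_def position_less)
    qed
    show "(\<Sum>\<kappa>\<in>K. \<Prod>t<d. g \<kappa> t (x (s \<kappa> t))) \<noteq> 0" if "x \<in> X1 m n" for x
      using sum_interpolation_X1[OF assms(2,1) that] assms(4) by (simp add: sum)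
    show "(\<Sum>\<kappa>\<in>K. \<Prod>t<d. g \<kappa> t (x (s \<kappa> t))) = 0" if "x \<in> X0 m n" for x
      using sum_interpolation_X0[OF assms(2,1) that] by (simp add: sum)
    show "(\<lambda>p. p mod (2*m) < m) \<in> X1 m n" by (rule X1_witness[OF assms(1)])
  qed
qed

theorem theorem1:
  fixes m n :: nat
  assumes "even m" and "even n" and "m > 0" and "n > 0"
  shows "NQ (2*m*n) (X0 m n) (X1 m n) = min (n div 2) (m div 2) + 1"
  unfolding NQ_def
proof (rule Least_equality)
  show "nq_algorithm (2*m*n) (min (n div 2) (m div 2) + 1) (X0 m n) (X1 m n)"
    using nq_algorithm_n_half[OF assms(3,2,4)] nq_algorithm_m_half[OF assms(3,1,2,4)]
    by (cases "n div 2 \<le> m div 2") (simp_all add: min_def)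
  show "min (n div 2) (m div 2) + 1 \<le> T" if "nq_algorithm (2*m*n) T (X0 m n) (X1 m n)" for T
    using nq_algorithm_lower_bound[OF assms(3,1,4,2) that] by simp
qed

end
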